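(* For every strongly binary $2$-matroid $Z$ there is a unique strongly binary $2$-sheltering matroid $Q$ such that $\mathcal Z(Q)=Z$.
   Context: Let $\Omega$ be a partition of a finite set $U$ into classes of size $2$. A subtransversal (transversal) meets every class in at most (exactly) one element. A transversal $2$-tuple is an ordered pair $\tau=(T_1,T_2)$ of disjoint transversals; each $t\in T_1$ corresponds to the unique $\bar t\in T_2$ with $\{t,\bar t\}\in\Omega$. For a $T_1\times T_2$ matrix $A$ over a field $\mathbb F$ that is skew-symmetric (i.e. $A_{s,\bar t}=-A_{t,\bar s}$ for all $s,t\in T_1$), $\mathcal Q(A,\tau,2)=(M,\Omega)$ where $M$ is the column matroid of $(I\mid A)$, rows indexed by $T_1$, identity columns indexed by $T_1$ and the columns of $A$ indexed by $T_2$; this is a $2$-sheltering matroid. A sheltering matroid is a pair $Q=(M,\Omega)$ with $M$ a matroid on $U$ such that for every independent subtransversal $I$ and every class $\{x,y\}$ disjoint from $I$, $I\cup\{x\}$ or $I\cup\{y\}$ is independent; $\mathcal Z(Q)$ denotes the multimatroid ($2$-matroid) on $(U,\Omega)$ whose independent sets are the independent subtransversals of $M$. A $2$-sheltering matroid $Q$ is strongly binary if $Q=\mathcal Q(A,\tau,2)$ for some transversal $2$-tuple $\tau$ and some skew-symmetric (equivalently, symmetric) matrix $A$ over $GF(2)$; a $2$-matroid $Z$ is strongly binary if $Z=\mathcal Z(Q)$ for some strongly binary $2$-sheltering matroid $Q$. Equality of sheltering matroids means equality of the matroids on $U$ together with the same partition $\Omega$. *)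

theory Defs
  imports Main "HOL-Library.Z2"
begin

definition pair_partition :: "'a set set \<Rightarrow> bool" where
  "pair_partition \<Omega> \<longleftrightarrow> finite (\<Union>\<Omega>) \<and> (\<forall>\<omega>\<in>\<Omega>. card \<omega> = 2)
     \<and> (\<forall>\<omega>1\<in>\<Omega>. \<forall>\<omega>2\<in>\<Omega>. \<omega>1 \<noteq> \<omega>2 \<longrightarrow> \<omega>1 \<inter> \<omega>2 = {})"

definition subtransversal :: "'a set set \<Rightarrow> 'a set \<Rightarrow> bool" where
  "subtransversal \<Omega> S \<longleftrightarrow> S \<subseteq> \<Union>\<Omega> \<and> (\<forall>\<omega>\<in>\<Omega>. card (S \<inter> \<omega>) \<le> 1)"

definition transversal :: "'a set set \<Rightarrow> 'a set \<Rightarrow> bool" where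
  "transversal \<Omega> T \<longleftrightarrow> T \<subseteq> \<Union>\<Omega> \<and> (\<forall>\<omega>\<in>\<Omega>. card (T \<inter> \<omega>) = 1)"

definition transversal_2tuple :: "'a set set \<Rightarrow> 'a set \<times> 'a set \<Rightarrow> bool" where
  "transversal_2tuple \<Omega> \<tau> \<longleftrightarrow> transversal \<Omega> (fst \<tau>) \<and> transversal \<Omega> (snd \<tau>)
     \<and> fst \<tau> \<inter> snd \<tau> = {}"

definition partner :: "'a set set \<Rightarrow> 'a set \<times> 'a set \<Rightarrow> 'a \<Rightarrow> 'a" where
  "partner \<Omega> \<tau> t = (THE u. u \<in> snd \<tau> \<and> {t, u} \<in> \<Omega>)"

text \<open>A T1 x T2 matrix over a field (entries A t u for t in T1, u in T2) is skew-symmetric.\<close>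
definition skew_symmetric :: "'a set set \<Rightarrow> 'a set \<times> 'a set \<Rightarrow> ('a \<Rightarrow> 'a \<Rightarrow> 'f::field) \<Rightarrow> bool" where
  "skew_symmetric \<Omega> \<tau> A \<longleftrightarrow>
     (\<forall>s\<in>fst \<tau>. \<forall>t\<in>fst \<tau>. A s (partner \<Omega> \<tau> t) = - A t (partner \<Omega> \<tau> s))"

text \<open>Columns of (I | A): rows indexed by T1; identity columns indexed by T1,
  columns of A indexed by T2.\<close>
definition IA_column :: "'a set \<times> 'a set \<Rightarrow> ('a \<Rightarrow> 'a \<Rightarrow> 'f::field) \<Rightarrow> 'a \<Rightarrow> 'a \<Rightarrow> 'f" where
  "IA_column \<tau> A u t = (if u \<in> fst \<tau> then (if t = u then 1 else 0) else A t u)"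

definition column_indep :: "'a set \<times> 'a set \<Rightarrow> ('a \<Rightarrow> 'a \<Rightarrow> 'f::field) \<Rightarrow> 'a set \<Rightarrow> bool" where
  "column_indep \<tau> A S \<longleftrightarrow> S \<subseteq> fst \<tau> \<union> snd \<tau> \<and>
     (\<forall>c :: 'a \<Rightarrow> 'f. (\<forall>t\<in>fst \<tau>. (\<Sum>u\<in>S. c u * IA_column \<tau> A u t) = 0) \<longrightarrow> (\<forall>u\<in>S. c u = 0))"

text \<open>A sheltering matroid Q = (M, \<Omega>) is represented as the pair (\<Omega>, family of independent
  sets of M); the ground set is \<Union>\<Omega>.\<close>
type_synonym 'a sheltering = "'a set set \<times> 'a set set"

text \<open>A 2-matroid (multimatroid) on (U, \<Omega>) represented as (\<Omega>, independent sets).\<close>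
type_synonym 'a multimatroid = "'a set set \<times> 'a set set"

definition Q_of :: "('a \<Rightarrow> 'a \<Rightarrow> 'f::field) \<Rightarrow> 'a set \<times> 'a set \<Rightarrow> 'a set set \<Rightarrow> 'a sheltering" where
  "Q_of A \<tau> \<Omega> = (\<Omega>, {S. column_indep \<tau> A S})"

definition Z_of :: "'a sheltering \<Rightarrow> 'a multimatroid" where
  "Z_of Q = (fst Q, {I \<in> snd Q. subtransversal (fst Q) I})"

definition strongly_binary_sheltering :: "'a sheltering \<Rightarrow> bool" where
  "strongly_binary_sheltering Q \<longleftrightarrow> pair_partition (fst Q) \<and>
     (\<exists>\<tau> (A :: 'a \<Rightarrow> 'a \<Rightarrow> bit). transversal_2tuple (fst Q) \<tau> \<and>
        skew_symmetric (fst Q) \<tau> A \<and> Q = Q_of A \<tau> (fst Q))"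

definition strongly_binary_2matroid :: "'a multimatroid \<Rightarrow> bool" where
  "strongly_binary_2matroid Z \<longleftrightarrow> (\<exists>Q. strongly_binary_sheltering Q \<and> Z = Z_of Q)"

end

theory Submission
  imports Defs
begin

(*
  The cycles of the binary matroid of (I | A), i.e. the sets of columns summing to zero, form a
  space that is closed under symmetric difference, contains no nonempty subset of T1, contains
  for every u in T2 a unique fundamental cycle C_u inside T1 + u, and, because A is symmetric, is
  isotropic: any two cycles Y, Z have an even number of elements a in Y with mate a in Z.
  Every strongly binary representation of the same 2-matroid yields such a space relative to
  one fixed transversal 2-tuple (T1, T2). The independent subtransversals already determine
  the fundamental cycles: mate u lies in C_u iff T1 - mate u + u is independent, and for v in
  T2 - u, isotropy of C_u and C_v ties mate v in C_u to the dependence of T1 - {mate u, mate v}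
  + {u, v}. Since the fundamental cycles generate all cycles, the matroid is determined.
*)

lemma pair_partition_class_eq:
  assumes "pair_partition \<Omega>" and "\<omega>1 \<in> \<Omega>" "\<omega>2 \<in> \<Omega>" and "a \<in> \<omega>1" "a \<in> \<omega>2"
  shows "\<omega>1 = \<omega>2"
proof -
  have "\<omega>1 \<noteq> \<omega>2 \<longrightarrow> \<omega>1 \<inter> \<omega>2 = {}"
    using assms(1-3) unfolding pair_partition_def by simp
  then show ?thesis using assms(4,5) by blast
qed

lemma pair_partition_class_doubleton:
  assumes "pair_partition \<Omega>" and "\<omega> \<in> \<Omega>" and "a \<in> \<omega>"
  obtains b where "b \<noteq> a" "\<omega> = {a, b}"
proof -
  have "card \<omega> = 2" using assms unfolding pair_partition_def by simp
  then obtain x y where xy: "x \<noteq> y" "\<omega> = {x, y}" by (meson card_2_iff)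
  show ?thesis
  proof (cases "a = x")
    case True then show ?thesis using that[of y] xy by simp
  next
    case False
    then have "a = y" using xy assms(3) by blast
    then show ?thesis using that[of x] xy by (simp add: insert_commute)
  qed
qed

definition mate :: "'a set set \<Rightarrow> 'a \<Rightarrow> 'a" where
  "mate \<Omega> a = (THE b. b \<noteq> a \<and> {a, b} \<in> \<Omega>)"

lemma pair_partition_ex1_mate:
  assumes pp: "pair_partition \<Omega>" and "a \<in> \<Union>\<Omega>"
  shows "\<exists>!b. b \<noteq> a \<and> {a, b} \<in> \<Omega>"
proof -
  obtain \<omega> where \<omega>: "\<omega> \<in> \<Omega>" "a \<in> \<omega>" using assms(2) by blast
  obtain b where b: "b \<noteq> a" "\<omega> = {a, b}" using pair_partition_class_doubleton[OF pp \<omega>] .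
  show ?thesis
  proof (rule ex1I[of _ b])
    show "b \<noteq> a \<and> {a, b} \<in> \<Omega>" using b \<omega> by simp
  next
    fix b' assume b': "b' \<noteq> a \<and> {a, b'} \<in> \<Omega>"
    then have "{a, b'} = \<omega>" using pair_partition_class_eq[OF pp _ \<omega>(1) _ \<omega>(2)] by simp
    then show "b' = b" using b b' by auto
  qed
qed

lemma
  assumes "pair_partition \<Omega>" and "a \<in> \<Union>\<Omega>"
  shows mate_neq: "mate \<Omega> a \<noteq> a" and mate_class: "{a, mate \<Omega> a} \<in> \<Omega>"
  using theI'[OF pair_partition_ex1_mate[OF assms]] unfolding mate_def by auto

lemma mate_eqI:
  assumes pp: "pair_partition \<Omega>" and "{a, b} \<in> \<Omega>" and "b \<noteq> a"
  shows "mate \<Omega> a = b"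
  unfolding mate_def
proof (rule the1_equality)
  show "\<exists>!b. b \<noteq> a \<and> {a, b} \<in> \<Omega>" using pair_partition_ex1_mate[OF pp] assms(2) by blast
qed (use assms in simp)

lemma mate_mate:
  assumes pp: "pair_partition \<Omega>" and a: "a \<in> \<Union>\<Omega>"
  shows "mate \<Omega> (mate \<Omega> a) = a"
  using mate_eqI[OF pp, of "mate \<Omega> a" a] mate_class[OF pp a] mate_neq[OF pp a]
  by (simp add: insert_commute)

lemma subtransversalI:
  assumes pp: "pair_partition \<Omega>" and "X \<subseteq> \<Union>\<Omega>"
    and no_mate: "\<And>a. a \<in> X \<Longrightarrow> mate \<Omega> a \<notin> X"
  shows "subtransversal \<Omega> X"
  unfolding subtransversal_def
proof (intro conjI ballI)
  fix \<omega> assume \<omega>: "\<omega> \<in> \<Omega>"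
  show "card (X \<inter> \<omega>) \<le> 1"
  proof (cases "X \<inter> \<omega> = {}")
    case False
    then obtain a where a: "a \<in> X" "a \<in> \<omega>" by blast
    obtain b where b: "b \<noteq> a" "\<omega> = {a, b}" using pair_partition_class_doubleton[OF pp \<omega> a(2)] .
    have "mate \<Omega> a = b" using mate_eqI[OF pp] \<omega> b by simp
    then have "X \<inter> \<omega> = {a}" using no_mate[OF a(1)] a b by blast
    then show ?thesis by simp
  qed simp
qed (use assms in blast)

lemma mate_in_transversal:
  assumes pp: "pair_partition \<Omega>" and T: "transversal \<Omega> T"
    and a: "a \<in> \<Union>\<Omega>" "a \<notin> T"
  shows "mate \<Omega> a \<in> T"
proof -
  have "card (T \<inter> {a, mate \<Omega> a}) = 1"
    using T mate_class[OF pp a(1)] unfolding transversal_def by simp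
  then obtain x where x: "T \<inter> {a, mate \<Omega> a} = {x}" by (rule card_1_singletonE)
  then have "x = a \<or> x = mate \<Omega> a" "x \<in> T" by blast+
  then show ?thesis using a(2) by blast
qed

locale transversal_pair =
  fixes \<Omega> :: "'a set set" and T1 T2 :: "'a set"
  assumes pair_partition: "pair_partition \<Omega>"
    and transversal_2tuple: "transversal_2tuple \<Omega> (T1, T2)"
begin

lemma disjoint: "T1 \<inter> T2 = {}"
  using transversal_2tuple unfolding transversal_2tuple_def by simp

lemma transversal_fst: "transversal \<Omega> T1" and transversal_snd: "transversal \<Omega> T2"
  using transversal_2tuple unfolding transversal_2tuple_def by simp_all

lemma fst_subset: "T1 \<subseteq> \<Union>\<Omega>" and snd_subset: "T2 \<subseteq> \<Union>\<Omega>"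
  using transversal_fst transversal_snd unfolding transversal_def by simp_all

lemma mate_fst: "a \<in> T1 \<Longrightarrow> mate \<Omega> a \<in> T2"
  using mate_in_transversal[OF pair_partition transversal_snd] fst_subset disjoint by blast

lemma mate_snd: "a \<in> T2 \<Longrightarrow> mate \<Omega> a \<in> T1"
  using mate_in_transversal[OF pair_partition transversal_fst] snd_subset disjoint by blast

lemma Un_eq_Union: "T1 \<union> T2 = \<Union>\<Omega>"
proof
  show "T1 \<union> T2 \<subseteq> \<Union>\<Omega>" using fst_subset snd_subset by blast
  show "\<Union>\<Omega> \<subseteq> T1 \<union> T2"
  proof
    fix a assume a: "a \<in> \<Union>\<Omega>"
    show "a \<in> T1 \<union> T2"
    proof (rule ccontr)
      assume "a \<notin> T1 \<union> T2"
      then have "mate \<Omega> a \<in> T1" "mate \<Omega> a \<in> T2"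
        using mate_in_transversal[OF pair_partition _ a] transversal_fst transversal_snd by auto
      then show False using disjoint by blast
    qed
  qed
qed

lemma finite_Un: "finite (T1 \<union> T2)"
  using pair_partition Un_eq_Union unfolding pair_partition_def by simp

lemma mate_mate_Un: "a \<in> T1 \<union> T2 \<Longrightarrow> mate \<Omega> (mate \<Omega> a) = a"
  using mate_mate[OF pair_partition] Un_eq_Union by blast

lemma mate_neq_Un: "a \<in> T1 \<union> T2 \<Longrightarrow> mate \<Omega> a \<noteq> a"
  unfolding Un_eq_Union by (rule mate_neq[OF pair_partition])

lemma partner_eq_mate:
  assumes t: "t \<in> T1"
  shows "partner \<Omega> (T1, T2) t = mate \<Omega> t"
  unfolding partner_def snd_conv
proof (rule the_equality)
  have "t \<in> \<Union>\<Omega>" using t Un_eq_Union by blast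
  then show "mate \<Omega> t \<in> T2 \<and> {t, mate \<Omega> t} \<in> \<Omega>" using mate_fst[OF t] mate_class[OF pair_partition] by blast
next
  fix u assume u: "u \<in> T2 \<and> {t, u} \<in> \<Omega>"
  then have "u \<noteq> t" using t disjoint by blast
  then show "u = mate \<Omega> t" using mate_eqI[OF pair_partition, of t u] u by simp
qed

lemma card_Union: "card (\<Union>\<Omega>) = 2 * card T1"
proof -
  have "bij_betw (mate \<Omega>) T1 T2"
    by (rule bij_betw_byWitness[where f' = "mate \<Omega>"]) (use mate_fst mate_snd mate_mate_Un in auto)
  then have "card T1 = card T2" by (rule bij_betw_same_card)
  moreover have "card (T1 \<union> T2) = card T1 + card T2"
    using finite_Un disjoint by (simp add: card_Un_disjoint)
  ultimately show ?thesis using Un_eq_Union by simp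
qed

lemma subtransversal_exchange:
  assumes "S \<subseteq> T1" "W \<subseteq> T2" and "\<And>w. w \<in> W \<Longrightarrow> mate \<Omega> w \<notin> S"
  shows "subtransversal \<Omega> (S \<union> W)"
proof (rule subtransversalI[OF pair_partition])
  show "S \<union> W \<subseteq> \<Union>\<Omega>" using assms(1,2) Un_eq_Union by blast
next
  fix a assume a: "a \<in> S \<union> W"
  show "mate \<Omega> a \<notin> S \<union> W"
  proof (cases "a \<in> S")
    case True
    then have "mate \<Omega> (mate \<Omega> a) \<in> S" using assms(1) mate_mate_Un by auto
    then show ?thesis using True assms mate_fst disjoint by blast
  next
    case False
    then show ?thesis using a assms mate_snd disjoint by blast
  qed
qed

end

(* Keep bit arithmetic in ring form, so that algebra_simps and the field lemmas apply. *)
declare add_bit_eq_xor [simp del] mult_bit_eq_and [simp del]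

lemma bit_add_self [simp]: "x + x = (0 :: bit)"
  by (cases x) simp_all

lemma bit_add_eq_0_iff: "x + y = (0 :: bit) \<longleftrightarrow> x = y"
  by (cases x; cases y) simp_all

lemma of_nat_bit_eq_0_iff: "(of_nat n :: bit) = 0 \<longleftrightarrow> even n"
  by (induction n) (auto simp: bit_add_eq_0_iff)

lemma sum_sym_diff_bit:
  assumes "finite Y" "finite Z"
  shows "(\<Sum>x\<in>sym_diff Y Z. f x) = sum f Y + (sum f Z :: bit)"
proof -
  have "sum f Y = sum f (Y \<inter> Z) + sum f (Y - Z)" "sum f Z = sum f (Z \<inter> Y) + sum f (Z - Y)"
    using assms by (simp_all add: sum.Int_Diff)
  moreover have "(\<Sum>x\<in>sym_diff Y Z. f x) = sum f (Y - Z) + sum f (Z - Y)"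
    using assms by (intro sum.union_disjoint) auto
  ultimately show ?thesis by (simp add: algebra_simps Int_commute)
qed

lemma sum_bit_mult_eq_sum_support:
  assumes "finite X"
  shows "(\<Sum>u\<in>X. c u * f u) = (\<Sum>u\<in>{u\<in>X. c u = 1}. f u :: bit)"
proof -
  have "(\<Sum>u\<in>X. c u * f u) = (\<Sum>u\<in>X. if c u = 1 then f u else 0)"
    by (intro sum.cong) auto
  then show ?thesis using assms by (simp add: sum.inter_filter)
qed

lemma exists_zero_sum_subset_bit:
  fixes v :: "'x \<Rightarrow> 'r \<Rightarrow> bit"
  assumes "finite R" "finite X" "card R < card X"
  shows "\<exists>Y\<subseteq>X. Y \<noteq> {} \<and> (\<forall>r\<in>R. (\<Sum>y\<in>Y. v y r) = 0)"
proof -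
  define ones where "ones Y = {r\<in>R. (\<Sum>y\<in>Y. v y r) = 1}" for Y
  have "card (ones ` Pow X) \<le> card (Pow R)"
    using \<open>finite R\<close> by (intro card_mono) (auto simp: ones_def)
  also have "\<dots> < card (Pow X)" using assms by (simp add: card_Pow)
  finally have "\<not> inj_on ones (Pow X)" by (rule pigeonhole)
  then obtain Y1 Y2 where Y: "Y1 \<in> Pow X" "Y2 \<in> Pow X" "ones Y1 = ones Y2" "Y1 \<noteq> Y2"
    unfolding inj_on_def by blast
  have "finite Y1" "finite Y2" using Y(1,2) \<open>finite X\<close> finite_subset by auto
  moreover have "(\<Sum>y\<in>Y1. v y r) = (\<Sum>y\<in>Y2. v y r)" if "r \<in> R" for r
  proof -
    have "(\<Sum>y\<in>Y1. v y r) = 1 \<longleftrightarrow> (\<Sum>y\<in>Y2. v y r) = 1"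
      using Y(3) that unfolding ones_def by blast
    then show ?thesis by (cases "(\<Sum>y\<in>Y1. v y r) = 1") simp_all
  qed
  ultimately have "\<forall>r\<in>R. (\<Sum>y\<in>sym_diff Y1 Y2. v y r) = 0" by (simp add: sum_sym_diff_bit)
  moreover have "sym_diff Y1 Y2 \<noteq> {}"
  proof
    assume "sym_diff Y1 Y2 = {}"
    then have "Y1 = Y2" by blast
    with Y(4) show False by contradiction
  qed
  moreover have "sym_diff Y1 Y2 \<subseteq> X" using Y(1,2) by blast
  ultimately show ?thesis by blast
qed

definition column_cycle :: "'a set \<times> 'a set \<Rightarrow> ('a \<Rightarrow> 'a \<Rightarrow> bit) \<Rightarrow> 'a set \<Rightarrow> bool" where
  "column_cycle \<tau> A Y \<longleftrightarrow> Y \<subseteq> fst \<tau> \<union> snd \<tau> \<and> (\<forall>t\<in>fst \<tau>. (\<Sum>y\<in>Y. IA_column \<tau> A y t) = 0)"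

definition contains_cycle :: "('a set \<Rightarrow> bool) \<Rightarrow> 'a set \<Rightarrow> bool" where
  "contains_cycle c X \<longleftrightarrow> (\<exists>Y\<subseteq>X. Y \<noteq> {} \<and> c Y)"

lemma contains_cycleI: "Y \<subseteq> X \<Longrightarrow> Y \<noteq> {} \<Longrightarrow> c Y \<Longrightarrow> contains_cycle c X"
  unfolding contains_cycle_def by blast

lemma contains_cycleE:
  assumes "contains_cycle c X"
  obtains Y where "Y \<subseteq> X" "Y \<noteq> {}" "c Y"
  using assms unfolding contains_cycle_def by blast

lemma column_cycle_empty: "column_cycle \<tau> A {}"
  unfolding column_cycle_def by simp

context transversal_pair
begin

lemma column_indep_iff_not_contains_cycle:
  "column_indep (T1, T2) A X \<longleftrightarrow> X \<subseteq> T1 \<union> T2 \<and> \<not> contains_cycle (column_cycle (T1, T2) A) X"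
proof (cases "X \<subseteq> T1 \<union> T2")
  case True
  then have "finite X" using finite_Un finite_subset by blast
  have sum_eq: "(\<Sum>u\<in>X. c u * IA_column (T1, T2) A u t) = (\<Sum>u\<in>{u\<in>X. c u = 1}. IA_column (T1, T2) A u t)"
    for c t by (rule sum_bit_mult_eq_sum_support[OF \<open>finite X\<close>])
  show ?thesis
  proof
    assume indep: "column_indep (T1, T2) A X"
    show "X \<subseteq> T1 \<union> T2 \<and> \<not> contains_cycle (column_cycle (T1, T2) A) X"
    proof (intro conjI True notI)
      assume "contains_cycle (column_cycle (T1, T2) A) X"
      then obtain Y where Y: "Y \<subseteq> X" "Y \<noteq> {}" "column_cycle (T1, T2) A Y"
        by (rule contains_cycleE)
      have "{u\<in>X. of_bool (u \<in> Y) = (1 :: bit)} = Y" using Y(1) by auto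
      then have "\<forall>t\<in>T1. (\<Sum>u\<in>X. of_bool (u \<in> Y) * IA_column (T1, T2) A u t) = 0"
        using Y(3) sum_eq[of "\<lambda>u. of_bool (u \<in> Y)"] unfolding column_cycle_def by simp
      moreover have "\<forall>c. (\<forall>t\<in>T1. (\<Sum>u\<in>X. c u * IA_column (T1, T2) A u t) = 0) \<longrightarrow> (\<forall>u\<in>X. c u = 0)"
        using indep unfolding column_indep_def by simp
      ultimately have "\<forall>u\<in>X. of_bool (u \<in> Y) = (0 :: bit)"
        by (rule mp[OF spec[where x = "\<lambda>u. of_bool (u \<in> Y)"], rotated])
      then show False using Y(1,2) by auto
    qed
  next
    assume no_cycle: "X \<subseteq> T1 \<union> T2 \<and> \<not> contains_cycle (column_cycle (T1, T2) A) X"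
    show "column_indep (T1, T2) A X"
      unfolding column_indep_def
    proof (intro conjI allI impI ballI)
      fix c :: "'a \<Rightarrow> bit" and u
      assume dep: "\<forall>t\<in>fst (T1, T2). (\<Sum>u\<in>X. c u * IA_column (T1, T2) A u t) = 0" and u: "u \<in> X"
      have "(\<Sum>u\<in>{u\<in>X. c u = 1}. IA_column (T1, T2) A u t) = 0" if "t \<in> T1" for t
        using dep that sum_eq[of c t] by simp
      then have "column_cycle (T1, T2) A {u\<in>X. c u = 1}"
        using True unfolding column_cycle_def by auto
      then have "{u\<in>X. c u = 1} = {}"
        using no_cycle contains_cycleI[of "{u\<in>X. c u = 1}" X "column_cycle (T1, T2) A"] by blast
      then show "c u = 0" using u by auto
    qed (use True in simp)
  qed
qed (simp add: column_indep_def)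

lemma column_cycle_sym_diff:
  assumes "column_cycle (T1, T2) A Y" "column_cycle (T1, T2) A Z"
  shows "column_cycle (T1, T2) A (sym_diff Y Z)"
proof -
  have "finite Y" "finite Z"
    using assms finite_Un finite_subset unfolding column_cycle_def by auto
  then show ?thesis using assms unfolding column_cycle_def by (auto simp: sum_sym_diff_bit)
qed

lemma column_cycle_row:
  assumes Y: "column_cycle (T1, T2) A Y" and t: "t \<in> T1"
  shows "of_bool (t \<in> Y) = (\<Sum>y\<in>Y \<inter> T2. A t y)"
proof -
  have YU: "Y \<subseteq> T1 \<union> T2" using Y unfolding column_cycle_def by simp
  then have "finite Y" using finite_Un finite_subset by blast
  then have "(\<Sum>y\<in>Y. IA_column (T1, T2) A y t)
      = (\<Sum>y\<in>Y \<inter> T1. IA_column (T1, T2) A y t) + (\<Sum>y\<in>Y - T1. IA_column (T1, T2) A y t)"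
    by (simp add: sum.Int_Diff)
  also have "(\<Sum>y\<in>Y \<inter> T1. IA_column (T1, T2) A y t) = (\<Sum>y\<in>Y \<inter> T1. if y = t then 1 else 0)"
    unfolding IA_column_def by (intro sum.cong) auto
  also have "\<dots> = of_bool (t \<in> Y)" using \<open>finite Y\<close> t by (simp add: sum.delta')
  also have "Y - T1 = Y \<inter> T2" using YU disjoint by blast
  also have "(\<Sum>y\<in>Y \<inter> T2. IA_column (T1, T2) A y t) = (\<Sum>y\<in>Y \<inter> T2. A t y)"
    unfolding IA_column_def using disjoint by (intro sum.cong) auto
  finally show ?thesis using Y t unfolding column_cycle_def by (simp add: bit_add_eq_0_iff)
qed

lemma column_cycle_subset_fst:
  assumes "column_cycle (T1, T2) A Y" "Y \<subseteq> T1"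
  shows "Y = {}"
proof -
  have "Y \<inter> T2 = {}" using assms(2) disjoint by blast
  then show ?thesis using column_cycle_row[OF assms(1)] assms(2) by fastforce
qed

lemma skew_symmetric_mate:
  assumes skew: "skew_symmetric \<Omega> (T1, T2) B" and "y \<in> T2" "w \<in> T2"
  shows "B (mate \<Omega> w) y = - B (mate \<Omega> y) w"
proof -
  have "mate \<Omega> y \<in> T1" "mate \<Omega> w \<in> T1" using assms(2,3) mate_snd by blast+
  moreover have "partner \<Omega> (T1, T2) (mate \<Omega> y) = y" "partner \<Omega> (T1, T2) (mate \<Omega> w) = w"
    using calculation assms(2,3) partner_eq_mate mate_mate_Un by simp_all
  moreover have "B (mate \<Omega> w) (partner \<Omega> (T1, T2) (mate \<Omega> y))
      = - B (mate \<Omega> y) (partner \<Omega> (T1, T2) (mate \<Omega> w))"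
    using skew calculation(1,2) unfolding skew_symmetric_def fst_conv by blast
  ultimately show ?thesis by simp
qed

lemma card_mate_split:
  assumes "Y \<subseteq> T1 \<union> T2" "Z \<subseteq> T1 \<union> T2"
  shows "card {a\<in>Y. mate \<Omega> a \<in> Z} = card {a\<in>Y \<inter> T2. mate \<Omega> a \<in> Z} + card {a\<in>Z \<inter> T2. mate \<Omega> a \<in> Y}"
proof -
  have fin: "finite Y" "finite Z" using assms finite_Un finite_subset by blast+
  have split: "{a\<in>Y. mate \<Omega> a \<in> Z} = {a\<in>Y \<inter> T2. mate \<Omega> a \<in> Z} \<union> {a\<in>Y \<inter> T1. mate \<Omega> a \<in> Z}"
    using assms(1) by blast
  have "mate \<Omega> ` {a\<in>Z \<inter> T2. mate \<Omega> a \<in> Y} = {a\<in>Y \<inter> T1. mate \<Omega> a \<in> Z}"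
  proof (intro equalityI subsetI)
    fix b assume "b \<in> mate \<Omega> ` {a\<in>Z \<inter> T2. mate \<Omega> a \<in> Y}"
    then obtain a where "a \<in> Z \<inter> T2" "mate \<Omega> a \<in> Y" "b = mate \<Omega> a" by blast
    then show "b \<in> {a\<in>Y \<inter> T1. mate \<Omega> a \<in> Z}" using mate_snd mate_mate_Un by simp
  next
    fix b assume b: "b \<in> {a\<in>Y \<inter> T1. mate \<Omega> a \<in> Z}"
    then have "mate \<Omega> b \<in> {a\<in>Z \<inter> T2. mate \<Omega> a \<in> Y}" using mate_fst mate_mate_Un by simp
    moreover have "b = mate \<Omega> (mate \<Omega> b)" using b mate_mate_Un by simp
    ultimately show "b \<in> mate \<Omega> ` {a\<in>Z \<inter> T2. mate \<Omega> a \<in> Y}" by blast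
  qed
  moreover have "inj_on (mate \<Omega>) (T1 \<union> T2)" using mate_mate_Un by (metis inj_onI)
  then have "inj_on (mate \<Omega>) {a\<in>Z \<inter> T2. mate \<Omega> a \<in> Y}" by (rule inj_on_subset) blast
  ultimately have "card {a\<in>Z \<inter> T2. mate \<Omega> a \<in> Y} = card {a\<in>Y \<inter> T1. mate \<Omega> a \<in> Z}"
    using card_image by fastforce
  moreover have "card {a\<in>Y. mate \<Omega> a \<in> Z} = card {a\<in>Y \<inter> T2. mate \<Omega> a \<in> Z} + card {a\<in>Y \<inter> T1. mate \<Omega> a \<in> Z}"
    unfolding split using fin disjoint by (intro card_Un_disjoint) auto
  ultimately show ?thesis by simp
qed

lemma column_cycle_mate_count:
  assumes Z: "column_cycle (T1, T2) B Z" and "finite Y"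
  shows "of_nat (card {a\<in>Y \<inter> T2. mate \<Omega> a \<in> Z}) = (\<Sum>a\<in>Y \<inter> T2. \<Sum>w\<in>Z \<inter> T2. B (mate \<Omega> a) w)"
proof -
  have "{a\<in>Y \<inter> T2. mate \<Omega> a \<in> Z} = Y \<inter> T2 \<inter> {a. mate \<Omega> a \<in> Z}" by blast
  then have "of_nat (card {a\<in>Y \<inter> T2. mate \<Omega> a \<in> Z}) = (\<Sum>a\<in>Y \<inter> T2. of_bool (mate \<Omega> a \<in> Z) :: bit)"
    using \<open>finite Y\<close> by (simp add: of_bool_def sum.If_cases)
  also have "\<dots> = (\<Sum>a\<in>Y \<inter> T2. \<Sum>w\<in>Z \<inter> T2. B (mate \<Omega> a) w)"
    using column_cycle_row[OF Z] mate_snd by (intro sum.cong) auto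
  finally show ?thesis .
qed

lemma column_cycle_isotropic:
  assumes skew: "skew_symmetric \<Omega> (T1, T2) B"
    and Y: "column_cycle (T1, T2) B Y" and Z: "column_cycle (T1, T2) B Z"
  shows "even (card {a\<in>Y. mate \<Omega> a \<in> Z})"
proof -
  have sub: "Y \<subseteq> T1 \<union> T2" "Z \<subseteq> T1 \<union> T2" using Y Z unfolding column_cycle_def by simp_all
  then have fin: "finite Y" "finite Z" using finite_Un finite_subset by blast+
  define D where "D = (\<Sum>a\<in>Y \<inter> T2. \<Sum>w\<in>Z \<inter> T2. B (mate \<Omega> a) w)"
  have "(\<Sum>w\<in>Z \<inter> T2. \<Sum>a\<in>Y \<inter> T2. B (mate \<Omega> w) a) = D"
    unfolding D_def using skew_symmetric_mate[OF skew] by (subst sum.swap) (intro sum.cong; auto)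
  then have "of_nat (card {a\<in>Y. mate \<Omega> a \<in> Z}) = D + (D :: bit)"
    unfolding card_mate_split[OF sub] D_def
    using column_cycle_mate_count[OF Z fin(1)] column_cycle_mate_count[OF Y fin(2)] by simp
  then show ?thesis by (simp add: of_nat_bit_eq_0_iff)
qed

end

locale isotropic_cycle_space = transversal_pair +
  fixes c :: "'a set \<Rightarrow> bool"
  assumes cycle_subset: "c Y \<Longrightarrow> Y \<subseteq> T1 \<union> T2"
    and cycle_empty: "c {}"
    and cycle_sym_diff: "c Y \<Longrightarrow> c Z \<Longrightarrow> c (sym_diff Y Z)"
    and cycle_subset_fst: "c Y \<Longrightarrow> Y \<subseteq> T1 \<Longrightarrow> Y = {}"
    and fundamental_cycle_exists: "u \<in> T2 \<Longrightarrow> \<exists>Y. c Y \<and> Y \<inter> T2 = {u}"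
    and cycle_isotropic: "c Y \<Longrightarrow> c Z \<Longrightarrow> even (card {a\<in>Y. mate \<Omega> a \<in> Z})"
begin

lemma cycle_eqI:
  assumes "c Y" "c Y'" "Y \<inter> T2 = Y' \<inter> T2"
  shows "Y = Y'"
proof -
  have "sym_diff Y Y' \<subseteq> T1" using assms cycle_subset by blast
  then have "sym_diff Y Y' = {}" using cycle_subset_fst cycle_sym_diff assms(1,2) by blast
  then show ?thesis by blast
qed

lemma cycle_meets_snd: "c Y \<Longrightarrow> Y \<noteq> {} \<Longrightarrow> Y \<inter> T2 \<noteq> {}"
  using cycle_subset cycle_subset_fst by blast

definition fundamental_cycle :: "'a \<Rightarrow> 'a set" where
  "fundamental_cycle u = (THE Y. c Y \<and> Y \<inter> T2 = {u})"

lemma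
  assumes "u \<in> T2"
  shows fundamental_cycle_cycle: "c (fundamental_cycle u)"
    and fundamental_cycle_Int_snd: "fundamental_cycle u \<inter> T2 = {u}"
proof -
  have "\<exists>!Y. c Y \<and> Y \<inter> T2 = {u}" using fundamental_cycle_exists[OF assms] cycle_eqI by metis
  from theI'[OF this] show "c (fundamental_cycle u)" "fundamental_cycle u \<inter> T2 = {u}"
    unfolding fundamental_cycle_def by simp_all
qed

lemma fundamental_cycle_subset: "u \<in> T2 \<Longrightarrow> fundamental_cycle u \<subseteq> insert u T1"
  using fundamental_cycle_cycle fundamental_cycle_Int_snd cycle_subset by blast

lemma fundamental_cycle_unique: "u \<in> T2 \<Longrightarrow> c Y \<Longrightarrow> Y \<inter> T2 = {u} \<Longrightarrow> Y = fundamental_cycle u"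
  using cycle_eqI fundamental_cycle_cycle fundamental_cycle_Int_snd by simp

lemma cycle_transfer:
  assumes "c' {}" and c'_sym_diff: "\<And>Y Z. c' Y \<Longrightarrow> c' Z \<Longrightarrow> c' (sym_diff Y Z)"
    and c'_fundamental_cycle: "\<And>u. u \<in> T2 \<Longrightarrow> c' (fundamental_cycle u)"
    and "c Y"
  shows "c' Y"
proof -
  have "c' Y" if "finite P" "c Y" "Y \<inter> T2 = P" for P Y
    using that
  proof (induction P arbitrary: Y rule: finite_induct)
    case empty
    then have "Y = {}" using cycle_subset cycle_subset_fst by blast
    then show ?case using assms(1) by simp
  next
    case (insert u P)
    have u: "u \<in> T2" using insert.prems(2) by blast
    let ?G = "fundamental_cycle u"
    have "x \<in> ?G \<longleftrightarrow> x = u" if "x \<in> T2" for x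
      using that fundamental_cycle_Int_snd[OF u] by blast
    moreover have "x \<in> Y \<longleftrightarrow> x \<in> insert u P" if "x \<in> T2" for x
      using that insert.prems(2) by blast
    moreover have "P \<subseteq> T2" using insert.prems(2) by blast
    ultimately have "sym_diff Y ?G \<inter> T2 = P" using insert.hyps(2) by auto
    moreover have "c (sym_diff Y ?G)"
      using cycle_sym_diff[OF insert.prems(1) fundamental_cycle_cycle[OF u]] .
    ultimately have "c' (sym_diff Y ?G)" by (rule insert.IH[rotated])
    then have "c' (sym_diff (sym_diff Y ?G) ?G)" using c'_sym_diff c'_fundamental_cycle[OF u] by blast
    moreover have "sym_diff (sym_diff Y ?G) ?G = Y" by blast
    ultimately show ?case by simp
  qed
  moreover have "finite (Y \<inter> T2)" using finite_Un by blast
  ultimately show ?thesis using \<open>c Y\<close> by blast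
qed

lemma mate_in_fundamental_cycle_iff:
  assumes u: "u \<in> T2"
  shows "mate \<Omega> u \<in> fundamental_cycle u \<longleftrightarrow> \<not> contains_cycle c (insert u (T1 - {mate \<Omega> u}))"
proof
  assume mate_in: "mate \<Omega> u \<in> fundamental_cycle u"
  show "\<not> contains_cycle c (insert u (T1 - {mate \<Omega> u}))"
  proof
    assume "contains_cycle c (insert u (T1 - {mate \<Omega> u}))"
    then obtain Y where Y: "Y \<subseteq> insert u (T1 - {mate \<Omega> u})" "Y \<noteq> {}" "c Y"
      by (rule contains_cycleE)
    have "Y \<inter> T2 \<subseteq> {u}" using Y(1) disjoint by blast
    then have "Y \<inter> T2 = {u}" using cycle_meets_snd[OF Y(3,2)] by (auto dest: subset_singletonD)
    then have "Y = fundamental_cycle u" using fundamental_cycle_unique[OF u Y(3)] by simp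
    moreover have "mate \<Omega> u \<noteq> u" using u by (intro mate_neq_Un) simp
    ultimately show False using Y(1) mate_in by blast
  qed
next
  assume no_cycle: "\<not> contains_cycle c (insert u (T1 - {mate \<Omega> u}))"
  show "mate \<Omega> u \<in> fundamental_cycle u"
  proof (rule ccontr)
    assume "mate \<Omega> u \<notin> fundamental_cycle u"
    then have "fundamental_cycle u \<subseteq> insert u (T1 - {mate \<Omega> u})"
      using fundamental_cycle_subset[OF u] by blast
    moreover have "fundamental_cycle u \<noteq> {}" using fundamental_cycle_Int_snd[OF u] by blast
    ultimately show False
      using no_cycle contains_cycleI[of _ _ c] fundamental_cycle_cycle[OF u] by blast
  qed
qed

lemma fundamental_cycle_mate_sym:
  assumes u: "u \<in> T2" and v: "v \<in> T2" and "u \<noteq> v"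
  shows "mate \<Omega> v \<in> fundamental_cycle u \<longleftrightarrow> mate \<Omega> u \<in> fundamental_cycle v"
proof -
  let ?Gu = "fundamental_cycle u" and ?Gv = "fundamental_cycle v"
  have "{a\<in>?Gu. mate \<Omega> a \<in> ?Gv} = {a. (a = u \<and> mate \<Omega> u \<in> ?Gv) \<or> (a = mate \<Omega> v \<and> mate \<Omega> v \<in> ?Gu)}"
  proof (intro equalityI subsetI)
    fix a assume a: "a \<in> {a\<in>?Gu. mate \<Omega> a \<in> ?Gv}"
    show "a \<in> {a. (a = u \<and> mate \<Omega> u \<in> ?Gv) \<or> (a = mate \<Omega> v \<and> mate \<Omega> v \<in> ?Gu)}"
    proof (cases "a = u")
      case False
      then have "a \<in> T1" using a fundamental_cycle_subset[OF u] by blast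
      then have "mate \<Omega> a = v" using a mate_fst fundamental_cycle_Int_snd[OF v] by blast
      then have "a = mate \<Omega> v" using mate_mate_Un \<open>a \<in> T1\<close> by force
      then show ?thesis using a by simp
    qed (use a in simp)
  next
    fix a assume "a \<in> {a. (a = u \<and> mate \<Omega> u \<in> ?Gv) \<or> (a = mate \<Omega> v \<and> mate \<Omega> v \<in> ?Gu)}"
    moreover have "u \<in> ?Gu" "v \<in> ?Gv"
      using fundamental_cycle_Int_snd[OF u] fundamental_cycle_Int_snd[OF v] by blast+
    ultimately show "a \<in> {a\<in>?Gu. mate \<Omega> a \<in> ?Gv}" using mate_mate_Un v by auto
  qed
  moreover have "even (card {a\<in>?Gu. mate \<Omega> a \<in> ?Gv})"
    using cycle_isotropic fundamental_cycle_cycle u v by blast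
  moreover have "u \<noteq> mate \<Omega> v" using mate_snd[OF v] u disjoint by blast
  ultimately show ?thesis
    by (cases "mate \<Omega> u \<in> ?Gv"; cases "mate \<Omega> v \<in> ?Gu") (simp_all add: Collect_disj_eq)
qed

lemma contains_cycle_exchange_two_iff:
  assumes u: "u \<in> T2" and v: "v \<in> T2" and uv: "u \<noteq> v"
  shows "contains_cycle c ((T1 - {mate \<Omega> u, mate \<Omega> v}) \<union> {u, v}) \<longleftrightarrow>
    (\<exists>Y\<in>{fundamental_cycle u, fundamental_cycle v, sym_diff (fundamental_cycle u) (fundamental_cycle v)}.
      mate \<Omega> u \<notin> Y \<and> mate \<Omega> v \<notin> Y)"
proof -
  let ?X = "(T1 - {mate \<Omega> u, mate \<Omega> v}) \<union> {u, v}"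
  let ?Gu = "fundamental_cycle u" and ?Gv = "fundamental_cycle v"
  let ?G = "sym_diff ?Gu ?Gv"
  have Gu: "c ?Gu" "?Gu \<inter> T2 = {u}" "?Gu \<subseteq> insert u T1"
    using fundamental_cycle_cycle fundamental_cycle_Int_snd fundamental_cycle_subset u by simp_all
  have Gv: "c ?Gv" "?Gv \<inter> T2 = {v}" "?Gv \<subseteq> insert v T1"
    using fundamental_cycle_cycle fundamental_cycle_Int_snd fundamental_cycle_subset v by simp_all
  have G: "c ?G" "?G \<inter> T2 = {u, v}" "?G \<subseteq> T1 \<union> {u, v}"
    using cycle_sym_diff[OF Gu(1) Gv(1)] Gu(2,3) Gv(2,3) uv by auto
  have mates_notin: "mate \<Omega> u \<notin> ?X" "mate \<Omega> v \<notin> ?X"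
    using mate_snd u v disjoint mate_neq_Un[of u] mate_neq_Un[of v] by auto
  show ?thesis
  proof
    assume "contains_cycle c ?X"
    then obtain Y where Y: "Y \<subseteq> ?X" "Y \<noteq> {}" "c Y" by (rule contains_cycleE)
    have "Y \<inter> T2 \<subseteq> {u, v}" using Y(1) disjoint by blast
    moreover have "Y \<inter> T2 \<noteq> {}" using cycle_meets_snd[OF Y(3,2)] .
    ultimately have "Y \<inter> T2 = {u} \<or> Y \<inter> T2 = {v} \<or> Y \<inter> T2 = ?G \<inter> T2"
      unfolding G(2) by (cases "u \<in> Y"; cases "v \<in> Y") auto
    then have "Y \<in> {?Gu, ?Gv, ?G}"
      using fundamental_cycle_unique[OF u Y(3)] fundamental_cycle_unique[OF v Y(3)] cycle_eqI[OF Y(3) G(1)]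
      by blast
    moreover have "mate \<Omega> u \<notin> Y" "mate \<Omega> v \<notin> Y" using Y(1) mates_notin by blast+
    ultimately show "\<exists>Y\<in>{?Gu, ?Gv, ?G}. mate \<Omega> u \<notin> Y \<and> mate \<Omega> v \<notin> Y"
      by (intro bexI[of _ Y] conjI)
  next
    assume "\<exists>Y\<in>{?Gu, ?Gv, ?G}. mate \<Omega> u \<notin> Y \<and> mate \<Omega> v \<notin> Y"
    then obtain Y where Y: "Y \<in> {?Gu, ?Gv, ?G}" "mate \<Omega> u \<notin> Y" "mate \<Omega> v \<notin> Y" by blast
    have "c Y" "Y \<inter> T2 \<noteq> {}" "Y \<subseteq> T1 \<union> {u, v}" using Y(1) Gu Gv G by auto
    then have "Y \<subseteq> ?X" "Y \<noteq> {}" using Y(2,3) by auto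
    then show "contains_cycle c ?X" using contains_cycleI \<open>c Y\<close> by blast
  qed
qed

lemma fundamental_cycle_cross_iff:
  assumes u: "u \<in> T2" and v: "v \<in> T2" and uv: "u \<noteq> v"
  shows "mate \<Omega> v \<in> fundamental_cycle u \<longleftrightarrow>
    (contains_cycle c ((T1 - {mate \<Omega> u, mate \<Omega> v}) \<union> {u, v}) \<longleftrightarrow>
     mate \<Omega> u \<in> fundamental_cycle u \<and> mate \<Omega> v \<in> fundamental_cycle v)"
  using contains_cycle_exchange_two_iff[OF u v uv] fundamental_cycle_mate_sym[OF u v uv] by auto

end

lemma (in transversal_pair) exists_column_cycle_Int_snd:
  assumes S: "transversal_pair \<Omega> S1 S2"
    and no_cycle_in_fst: "\<And>Y. column_cycle (S1, S2) B Y \<Longrightarrow> Y \<subseteq> T1 \<Longrightarrow> Y = {}"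
    and u: "u \<in> T2"
  shows "\<exists>Y. column_cycle (S1, S2) B Y \<and> Y \<inter> T2 = {u}"
proof -
  interpret S: transversal_pair \<Omega> S1 S2 by (rule S)
  have "finite T1" "u \<notin> T1" using finite_Un u disjoint by auto
  then have "card S1 < card (insert u T1)" using S.card_Union card_Union by simp
  then have "\<exists>Y\<subseteq>insert u T1. Y \<noteq> {} \<and> (\<forall>r\<in>S1. (\<Sum>y\<in>Y. IA_column (S1, S2) B y r) = 0)"
    using S.finite_Un \<open>finite T1\<close> by (intro exists_zero_sum_subset_bit) simp_all
  then obtain Y where Y: "Y \<subseteq> insert u T1" "Y \<noteq> {}"
    "\<forall>r\<in>S1. (\<Sum>y\<in>Y. IA_column (S1, S2) B y r) = 0"
    by blast
  have "S1 \<union> S2 = T1 \<union> T2" using S.Un_eq_Union Un_eq_Union by simp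
  then have cycle: "column_cycle (S1, S2) B Y" using Y u unfolding column_cycle_def by auto
  have "u \<in> Y"
  proof (rule ccontr)
    assume "u \<notin> Y"
    then have "Y \<subseteq> T1" using Y(1) by blast
    then show False using no_cycle_in_fst[OF cycle] Y(2) by blast
  qed
  moreover have "Y \<inter> T2 \<subseteq> {u}" using Y(1) disjoint by blast
  ultimately have "Y \<inter> T2 = {u}" using u by blast
  then show ?thesis using cycle by blast
qed

lemma (in transversal_pair) isotropic_cycle_space_column_cycle:
  assumes S: "transversal_pair \<Omega> S1 S2" and skew: "skew_symmetric \<Omega> (S1, S2) B"
    and no_cycle_in_fst: "\<And>Y. column_cycle (S1, S2) B Y \<Longrightarrow> Y \<subseteq> T1 \<Longrightarrow> Y = {}"
  shows "isotropic_cycle_space \<Omega> T1 T2 (column_cycle (S1, S2) B)"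
proof -
  interpret S: transversal_pair \<Omega> S1 S2 by (rule S)
  have Un_eq: "S1 \<union> S2 = T1 \<union> T2" using S.Un_eq_Union Un_eq_Union by simp
  show ?thesis
  proof (intro isotropic_cycle_space.intro isotropic_cycle_space_axioms.intro transversal_pair_axioms)
    show "column_cycle (S1, S2) B Y \<Longrightarrow> Y \<subseteq> T1 \<union> T2" for Y
      using Un_eq unfolding column_cycle_def by simp
    show "column_cycle (S1, S2) B {}" by (rule column_cycle_empty)
    show "column_cycle (S1, S2) B Y \<Longrightarrow> column_cycle (S1, S2) B Z \<Longrightarrow> column_cycle (S1, S2) B (sym_diff Y Z)"
      for Y Z by (rule S.column_cycle_sym_diff)
    show "column_cycle (S1, S2) B Y \<Longrightarrow> Y \<subseteq> T1 \<Longrightarrow> Y = {}" for Y by (rule no_cycle_in_fst)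
    show "u \<in> T2 \<Longrightarrow> \<exists>Y. column_cycle (S1, S2) B Y \<and> Y \<inter> T2 = {u}" for u
      by (rule exists_column_cycle_Int_snd[OF S no_cycle_in_fst])
    show "column_cycle (S1, S2) B Y \<Longrightarrow> column_cycle (S1, S2) B Z \<Longrightarrow> even (card {a\<in>Y. mate \<Omega> a \<in> Z})"
      for Y Z by (rule S.column_cycle_isotropic[OF skew])
  qed
qed

locale cycle_space_pair =
  c1: isotropic_cycle_space \<Omega> T1 T2 c1 + c2: isotropic_cycle_space \<Omega> T1 T2 c2
  for \<Omega> :: "'a set set" and T1 T2 :: "'a set" and c1 c2 :: "'a set \<Rightarrow> bool" +
  assumes same_dependent_subtransversals:
    "subtransversal \<Omega> X \<Longrightarrow> contains_cycle c1 X \<longleftrightarrow> contains_cycle c2 X"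
begin

lemma mate_in_fundamental_cycle_eq:
  assumes u: "u \<in> T2"
  shows "mate \<Omega> u \<in> c1.fundamental_cycle u \<longleftrightarrow> mate \<Omega> u \<in> c2.fundamental_cycle u"
proof -
  have "subtransversal \<Omega> ((T1 - {mate \<Omega> u}) \<union> {u})"
    using u c1.mate_mate_Un by (intro c1.subtransversal_exchange) auto
  then show ?thesis
    using same_dependent_subtransversals c1.mate_in_fundamental_cycle_iff[OF u]
      c2.mate_in_fundamental_cycle_iff[OF u] by simp
qed

lemma fundamental_cycle_eq:
  assumes u: "u \<in> T2"
  shows "c1.fundamental_cycle u = c2.fundamental_cycle u"
proof (rule set_eqI)
  fix a
  show "a \<in> c1.fundamental_cycle u \<longleftrightarrow> a \<in> c2.fundamental_cycle u"
  proof (cases "a \<in> T1 - {mate \<Omega> u}")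
    case False
    moreover have "u \<in> c1.fundamental_cycle u" "u \<in> c2.fundamental_cycle u"
      using c1.fundamental_cycle_Int_snd c2.fundamental_cycle_Int_snd u by blast+
    ultimately show ?thesis
      using c1.fundamental_cycle_subset[OF u] c2.fundamental_cycle_subset[OF u]
        mate_in_fundamental_cycle_eq[OF u] by blast
  next
    case True
    define v where "v = mate \<Omega> a"
    have v: "v \<in> T2" "a = mate \<Omega> v" using True c1.mate_fst c1.mate_mate_Un unfolding v_def by auto
    have "u \<noteq> v" using True v(2) by blast
    have "subtransversal \<Omega> ((T1 - {mate \<Omega> u, mate \<Omega> v}) \<union> {u, v})"
      using u v c1.mate_mate_Un by (intro c1.subtransversal_exchange) auto
    then show ?thesis
      using same_dependent_subtransversals mate_in_fundamental_cycle_eq u v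
        c1.fundamental_cycle_cross_iff[OF u v(1) \<open>u \<noteq> v\<close>]
        c2.fundamental_cycle_cross_iff[OF u v(1) \<open>u \<noteq> v\<close>]
      by simp
  qed
qed

lemma cycles_eq: "c1 = c2"
proof -
  have "c1 Y \<Longrightarrow> c2 Y" for Y
    using c1.cycle_transfer[OF c2.cycle_empty c2.cycle_sym_diff] fundamental_cycle_eq
      c2.fundamental_cycle_cycle by simp
  moreover have "c2 Y \<Longrightarrow> c1 Y" for Y
    using c2.cycle_transfer[OF c1.cycle_empty c1.cycle_sym_diff] fundamental_cycle_eq
      c1.fundamental_cycle_cycle by simp
  ultimately show ?thesis by blast
qed

end

lemma strongly_binary_shelteringE:
  assumes "strongly_binary_sheltering Q" and "fst Q = \<Omega>"
  obtains T1 T2 and A :: "'a \<Rightarrow> 'a \<Rightarrow> bit"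
  where "transversal_pair \<Omega> T1 T2" "skew_symmetric \<Omega> (T1, T2) A"
    "snd Q = {X. column_indep (T1, T2) A X}"
proof -
  obtain \<tau> and A :: "'a \<Rightarrow> 'a \<Rightarrow> bit" where tuple: "transversal_2tuple \<Omega> \<tau>"
    and skew: "skew_symmetric \<Omega> \<tau> A" and Q_eq: "Q = Q_of A \<tau> \<Omega>"
    and pp: "pair_partition \<Omega>"
    using assms unfolding strongly_binary_sheltering_def by blast
  have "snd Q = {X. column_indep \<tau> A X}" by (subst Q_eq) (simp add: Q_of_def)
  moreover have "transversal_pair \<Omega> (fst \<tau>) (snd \<tau>)"
    using tuple pp by (simp add: transversal_pair_def)
  ultimately show ?thesis using that[of "fst \<tau>" "snd \<tau>" A] skew by simp
qed

lemma (in transversal_pair) column_indep_eq_if_eq_on_subtransversals: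
  fixes A B :: "'a \<Rightarrow> 'a \<Rightarrow> bit"
  assumes S: "transversal_pair \<Omega> S1 S2"
    and skew_A: "skew_symmetric \<Omega> (T1, T2) A" and skew_B: "skew_symmetric \<Omega> (S1, S2) B"
    and same_indep: "\<And>X. subtransversal \<Omega> X \<Longrightarrow> column_indep (T1, T2) A X \<longleftrightarrow> column_indep (S1, S2) B X"
  shows "column_indep (T1, T2) A X \<longleftrightarrow> column_indep (S1, S2) B X"
proof -
  interpret S: transversal_pair \<Omega> S1 S2 by (rule S)
  have Un_eq: "S1 \<union> S2 = T1 \<union> T2" using S.Un_eq_Union Un_eq_Union by simp
  have same_dependent:
    "contains_cycle (column_cycle (T1, T2) A) X \<longleftrightarrow> contains_cycle (column_cycle (S1, S2) B) X"
    if "subtransversal \<Omega> X" for X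
  proof -
    have "X \<subseteq> T1 \<union> T2" using that Un_eq_Union unfolding subtransversal_def by simp
    then show ?thesis
      using same_indep[OF that] column_indep_iff_not_contains_cycle
        S.column_indep_iff_not_contains_cycle Un_eq by simp
  qed
  have "\<not> contains_cycle (column_cycle (T1, T2) A) T1"
  proof
    assume "contains_cycle (column_cycle (T1, T2) A) T1"
    then obtain Y where "Y \<subseteq> T1" "Y \<noteq> {}" "column_cycle (T1, T2) A Y" by (rule contains_cycleE)
    then show False using column_cycle_subset_fst[of A Y] by simp
  qed
  moreover have "subtransversal \<Omega> T1" using subtransversal_exchange[of T1 "{}"] by simp
  ultimately have "\<not> contains_cycle (column_cycle (S1, S2) B) T1" using same_dependent by simp
  then have no_B_cycle_in_T1: "Y = {}" if "column_cycle (S1, S2) B Y" "Y \<subseteq> T1" for Y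
    using contains_cycleI[of Y T1 "column_cycle (S1, S2) B"] that by blast
  interpret cycle_space_pair \<Omega> T1 T2 "column_cycle (T1, T2) A" "column_cycle (S1, S2) B"
  proof (intro cycle_space_pair.intro cycle_space_pair_axioms.intro)
    show "isotropic_cycle_space \<Omega> T1 T2 (column_cycle (T1, T2) A)"
      using isotropic_cycle_space_column_cycle[OF transversal_pair_axioms skew_A column_cycle_subset_fst] .
    show "isotropic_cycle_space \<Omega> T1 T2 (column_cycle (S1, S2) B)"
      using isotropic_cycle_space_column_cycle[OF S skew_B no_B_cycle_in_T1] .
  qed (rule same_dependent)
  show ?thesis
    using column_indep_iff_not_contains_cycle S.column_indep_iff_not_contains_cycle cycles_eq Un_eq
    by simp
qed

lemma strongly_binary_sheltering_eqI:
  assumes Q1: "strongly_binary_sheltering Q1" and Q2: "strongly_binary_sheltering Q2"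
    and Z: "Z_of Q1 = Z_of Q2"
  shows "Q1 = Q2"
proof -
  define \<Omega> where "\<Omega> = fst Q1"
  have "fst (Z_of Q2) = fst (Z_of Q1)" using Z by simp
  then have \<Omega>2: "fst Q2 = \<Omega>" unfolding Z_of_def \<Omega>_def by simp
  obtain T1 T2 and A :: "'a \<Rightarrow> 'a \<Rightarrow> bit" where
    T: "transversal_pair \<Omega> T1 T2" and skew_A: "skew_symmetric \<Omega> (T1, T2) A"
    and Q1_indep: "snd Q1 = {X. column_indep (T1, T2) A X}"
    using Q1 \<Omega>_def[symmetric] by (rule strongly_binary_shelteringE)
  obtain S1 S2 and B :: "'a \<Rightarrow> 'a \<Rightarrow> bit" where
    S: "transversal_pair \<Omega> S1 S2" and skew_B: "skew_symmetric \<Omega> (S1, S2) B"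
    and Q2_indep: "snd Q2 = {X. column_indep (S1, S2) B X}"
    using Q2 \<Omega>2 by (rule strongly_binary_shelteringE)
  have "{X \<in> snd Q1. subtransversal \<Omega> X} = {X \<in> snd Q2. subtransversal \<Omega> X}"
    using Z \<Omega>2 unfolding Z_of_def \<Omega>_def by simp
  then have "column_indep (T1, T2) A X \<longleftrightarrow> column_indep (S1, S2) B X"
    if "subtransversal \<Omega> X" for X
    using that unfolding Q1_indep Q2_indep by blast
  then have "column_indep (T1, T2) A X \<longleftrightarrow> column_indep (S1, S2) B X" for X
    by (rule transversal_pair.column_indep_eq_if_eq_on_subtransversals[OF T S skew_A skew_B])
  then have "snd Q1 = snd Q2" unfolding Q1_indep Q2_indep by blast
  then show ?thesis using \<Omega>2 unfolding \<Omega>_def by (simp add: prod_eq_iff)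
qed

theorem proposition2p13:
  fixes Z :: "'a multimatroid"
  assumes "strongly_binary_2matroid Z"
  shows "\<exists>!Q. strongly_binary_sheltering Q \<and> Z_of Q = Z"
proof -
  obtain Q0 where Q0: "strongly_binary_sheltering Q0" "Z_of Q0 = Z"
    using assms unfolding strongly_binary_2matroid_def by blast
  show ?thesis
  proof (rule ex1I[of _ Q0])
    show "strongly_binary_sheltering Q0 \<and> Z_of Q0 = Z" using Q0 by simp
  next
    fix Q assume "strongly_binary_sheltering Q \<and> Z_of Q = Z"
    then show "Q = Q0" using strongly_binary_sheltering_eqI[of Q Q0] Q0 by simp
  qed
qed

end
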